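(* Let $M$ be a commutative monoid with identity $e$ and $\mathcal{A}$ an $\mathbb{H}M$-module. For every $r\ge1$, $H^0(M,r;\mathcal{A})\cong\mathcal{A}(e)$.
   Context: Let $M$ be a commutative monoid with identity $e$. $\mathbb{H}M$ has objects the elements of $M$ and morphisms $(x,y):x\to xy$, composition $(xy,z)(x,y)=(x,yz)$. An $\mathbb{H}M$-module $\mathcal{A}$ is a functor $\mathbb{H}M\to\mathbf{Ab}$: groups $\mathcal{A}(x)$ with $y_*:\mathcal{A}(x)\to\mathcal{A}(xy)$, $y_*z_*=(yz)_*$, $e_*=\mathrm{id}$. Tensor product $(\mathcal{A}\otimes_{\mathbb{H}M}\mathcal{B})(x)=\bigoplus_{zt=x}\mathcal{A}(z)\otimes\mathcal{B}(t)/(u_*a\otimes b=a\otimes u_*b)$; unit the constant module $\mathbb{Z}$; chain complexes of $\mathbb{H}M$-modules form a symmetric monoidal category with Koszul signs. A commutative DGA-algebra over $\mathbb{H}M$ is a commutative monoid $(\mathcal{A},\circ,\iota)$ there with a monoid morphism $\epsilon:\mathcal{A}\to\mathbb{Z}$, $\epsilon_x(a)=\tilde\epsilon(a)x$. Its reduced bar construction $\mathbf{B}(\mathcal{A})$ has $\mathbf{B}(\mathcal{A})_n(x)$ generated by $[\,]$ (degree $0$) and $[a_1|\cdots|a_p]$ with $a_i\in(\mathrm{coker}\,\iota)_{r_i}(x_i)$, $x_1\cdots x_p=x$, $p+\sum r_i=n$; differential $\partial[a_1|\cdots|a_p]=-\sum_i(-1)^{e_{i-1}}[\cdots|\partial a_i|\cdots]+\tilde\epsilon(a_1)x_{1*}[a_2|\cdots]+\sum_{i<p}(-1)^{e_i}[\cdots|a_i\circ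 a_{i+1}|\cdots]+(-1)^{e_p}\tilde\epsilon(a_p)x_{p*}[\cdots|a_{p-1}]$, $e_i=i+r_1+\cdots+r_i$; multiplication the signed shuffle product $[a_1|\cdots|a_p]\circ[a_{p+1}|\cdots|a_{p+q}]=\sum_\sigma(-1)^{e(\sigma)}[a_{\sigma^{-1}(1)}|\cdots|a_{\sigma^{-1}(p+q)}]$, $e(\sigma)=\sum_{\sigma(i)>\sigma(p+j)}(1+r_i)(1+r_{p+j})$; unit $[\,]$; augmentation $\mathbf{B}(\mathcal{A})_0\cong\mathbb{Z}$. It is again such an algebra, so $\mathbf{B}^r$ is defined. $\mathcal{Z}M$: $\mathcal{Z}M(x)$ free abelian on $\{(u,v):uv=x\}$, $y_*(u,v)=(yu,v)$, $(u,v)\circ(w,t)=(uw,vt)$, unit $(e,e)$, degree $0$, augmentation $(u,v)\mapsto$ generator of $\mathbb{Z}(x)$. $H^n(M,r;\mathcal{A})=H^n(\mathrm{Hom}_{\mathbb{H}M}(\mathbf{B}^r(\mathcal{Z}M),\mathcal{A}))$. *)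

theory Defs
  imports "HOL-Library.Poly_Mapping" "HOL-Algebra.Algebra" "HOL-Combinatorics.Permutations"
begin

text \<open>All modules occurring (ZM and its iterated reduced bar constructions) are free
HM-modules.  A basis element at object x is a pair (u, g) where g is a "generator" and
u * wt g = x; the pair stands for u_* g.  Level 0 (ZM): Gz v stands for (e,v) in ZM(v),
so (u, Gz v) is the basis element (u,v) of ZM(uv).  Level r+1: Bar [g1,...,gp] stands for
[g1|...|gp] with the gi level-r generators different from the unit generator (so that they
represent a basis of coker iota).\<close>

datatype 'm gen = Gz 'm | Bar "'m gen list"

fun wt :: "'m::comm_monoid_mult gen \<Rightarrow> 'm" where
  "wt (Gz v) = v"
| "wt (Bar gs) = prod_list (map wt gs)"

fun gdeg :: "'m gen \<Rightarrow> nat" where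
  "gdeg (Gz v) = 0"
| "gdeg (Bar gs) = length gs + sum_list (map gdeg gs)"

type_synonym 'm chain = "('m \<times> 'm gen) \<Rightarrow>\<^sub>0 int"

definition push :: "'m::comm_monoid_mult \<Rightarrow> 'm chain \<Rightarrow> 'm chain" where
  "push y c = frag_extend (\<lambda>(u, g). frag_of (y * u, g)) c"

text \<open>A commutative DGA over HM with free basis data: differential, product and
augmentation (epsilon tilde) on generators, and the unit generator.\<close>
record 'm bdga =
  bd :: "'m gen \<Rightarrow> 'm chain"
  bm :: "'m gen \<Rightarrow> 'm gen \<Rightarrow> 'm chain"
  bep :: "'m gen \<Rightarrow> int"
  bunit :: "'m gen"

text \<open>ZM: (u,v) o (w,t) = (uw,vt), zero differential, augmentation 1 on every basis element,
unit (e,e).\<close>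
definition zm :: "'m::comm_monoid_mult bdga" where
  "zm = \<lparr>bd = (\<lambda>_. 0), bm = (\<lambda>g h. frag_of (1, Gz (wt g * wt h))),
         bep = (\<lambda>_. 1), bunit = Gz 1\<rparr>"

definition esgn :: "'m gen list \<Rightarrow> nat \<Rightarrow> int" where
  "esgn gs i = (-1) ^ (i + sum_list (map gdeg (take i gs)))"

text \<open>Replace the entries at positions i..<j of the bar by a chain c (elements of c of the
form w_* h become w_*[..|h|..]; the unit generator is zero in coker iota).\<close>
definition bar_repl :: "'m gen \<Rightarrow> 'm gen list \<Rightarrow> nat \<Rightarrow> nat \<Rightarrow> 'm chain \<Rightarrow> 'm chain" where
  "bar_repl u gs i j c =
     frag_extend (\<lambda>(w, h). if h = u then 0 else frag_of (w, Bar (take i gs @ [h] @ drop j gs))) c"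

definition bar_diff :: "'m::comm_monoid_mult bdga \<Rightarrow> 'm gen list \<Rightarrow> 'm chain" where
  "bar_diff A gs = (let p = length gs in
      - (\<Sum>k<p. frag_cmul (esgn gs k) (bar_repl (bunit A) gs k (Suc k) (bd A (gs ! k))))
      + (if p = 0 then 0 else frag_cmul (bep A (hd gs)) (frag_of (wt (hd gs), Bar (tl gs))))
      + (\<Sum>i\<in>{1..<p}. frag_cmul (esgn gs i)
            (bar_repl (bunit A) gs (i - 1) (Suc i) (bm A (gs ! (i - 1)) (gs ! i))))
      + (if p = 0 then 0 else frag_cmul (esgn gs p * bep A (last gs))
            (frag_of (wt (last gs), Bar (butlast gs)))))"

text \<open>(p,q)-shuffles: permutations sigma of {0..<p+q} increasing on {0..<p} and on {p..<p+q};
sigma i is the position of the i-th entry.\<close>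
definition shuffles :: "nat \<Rightarrow> nat \<Rightarrow> (nat \<Rightarrow> nat) set" where
  "shuffles p q = {\<sigma>. \<sigma> permutes {..<p + q} \<and> strict_mono_on {..<p} \<sigma> \<and> strict_mono_on {p..<p + q} \<sigma>}"

definition shuffle_exp :: "'m gen list \<Rightarrow> nat \<Rightarrow> nat \<Rightarrow> (nat \<Rightarrow> nat) \<Rightarrow> nat" where
  "shuffle_exp zs p q \<sigma> =
     (\<Sum>(i, j)\<in>{(i, j). i < p \<and> j < q \<and> \<sigma> (p + j) < \<sigma> i}.
        (1 + gdeg (zs ! i)) * (1 + gdeg (zs ! (p + j))))"

definition bar_mult :: "'m::comm_monoid_mult gen list \<Rightarrow> 'm gen list \<Rightarrow> 'm chain" where
  "bar_mult gs hs = (let p = length gs; q = length hs; zs = gs @ hs in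
      \<Sum>\<sigma>\<in>shuffles p q. frag_cmul ((-1) ^ shuffle_exp zs p q \<sigma>)
         (frag_of (1, Bar (map (\<lambda>k. zs ! inv_into UNIV \<sigma> k) [0..<p + q]))))"

definition barstep :: "'m::comm_monoid_mult bdga \<Rightarrow> 'm bdga" where
  "barstep A = \<lparr>bd = (\<lambda>g. case g of Bar gs \<Rightarrow> bar_diff A gs | Gz _ \<Rightarrow> 0),
                bm = (\<lambda>g h. case (g, h) of (Bar gs, Bar hs) \<Rightarrow> bar_mult gs hs | _ \<Rightarrow> 0),
                bep = (\<lambda>g. if g = Bar [] then 1 else 0),
                bunit = Bar []\<rparr>"

definition iter_bar :: "nat \<Rightarrow> 'm::comm_monoid_mult bdga" where
  "iter_bar r = (barstep ^^ r) zm"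

fun gens :: "nat \<Rightarrow> 'm::comm_monoid_mult gen set" where
  "gens 0 = range Gz"
| "gens (Suc r) = {Bar gs | gs. set gs \<subseteq> gens r - {bunit (iter_bar r :: 'm bdga)}}"

definition Bmod :: "nat \<Rightarrow> nat \<Rightarrow> 'm::comm_monoid_mult \<Rightarrow> 'm chain set" where
  "Bmod r n x = {c. \<forall>(w, g)\<in>Poly_Mapping.keys c. g \<in> gens r \<and> gdeg g = n \<and> w * wt g = x}"

definition Bgrp :: "nat \<Rightarrow> nat \<Rightarrow> 'm::comm_monoid_mult \<Rightarrow> 'm chain monoid" where
  "Bgrp r n x = \<lparr>carrier = Bmod r n x, Group.monoid.mult = (+), Group.monoid.one = 0\<rparr>"

definition bdiff :: "nat \<Rightarrow> 'm::comm_monoid_mult chain \<Rightarrow> 'm chain" where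
  "bdiff r c = frag_extend (\<lambda>(w, g). push w (bd (iter_bar r) g)) c"

text \<open>An HM-module: abelian groups A x, and act x y = y_* : A x \<rightarrow> A (x*y).\<close>
definition hm_module :: "('m::comm_monoid_mult \<Rightarrow> 'a monoid) \<Rightarrow> ('m \<Rightarrow> 'm \<Rightarrow> 'a \<Rightarrow> 'a) \<Rightarrow> bool" where
  "hm_module A act \<longleftrightarrow>
     (\<forall>x. comm_group (A x)) \<and>
     (\<forall>x y. act x y \<in> hom (A x) (A (x * y))) \<and>
     (\<forall>x a. a \<in> carrier (A x) \<longrightarrow> act x 1 a = a) \<and>
     (\<forall>x y z a. a \<in> carrier (A x) \<longrightarrow> act (x * y) z (act x y a) = act x (y * z) a)"

text \<open>Hom_HM(B^r(ZM)_n, A): natural families of homomorphisms (extensional).\<close>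
definition HomB :: "nat \<Rightarrow> nat \<Rightarrow> ('m::comm_monoid_mult \<Rightarrow> 'a monoid) \<Rightarrow> ('m \<Rightarrow> 'm \<Rightarrow> 'a \<Rightarrow> 'a)
    \<Rightarrow> ('m \<Rightarrow> 'm chain \<Rightarrow> 'a) set" where
  "HomB r n A act = {f. (\<forall>x. f x \<in> hom (Bgrp r n x) (A x) \<and>
                              (\<forall>c. c \<notin> Bmod r n x \<longrightarrow> f x c = undefined)) \<and>
                       (\<forall>x y c. c \<in> Bmod r n x \<longrightarrow> f (x * y) (push y c) = act x y (f x c))}"

definition HomG :: "nat \<Rightarrow> nat \<Rightarrow> ('m::comm_monoid_mult \<Rightarrow> 'a monoid) \<Rightarrow> ('m \<Rightarrow> 'm \<Rightarrow> 'a \<Rightarrow> 'a)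
    \<Rightarrow> ('m \<Rightarrow> 'm chain \<Rightarrow> 'a) monoid" where
  "HomG r n A act = \<lparr>carrier = HomB r n A act,
      Group.monoid.mult = (\<lambda>f g x c. if c \<in> Bmod r n x then f x c \<otimes>\<^bsub>A x\<^esub> g x c else undefined),
      Group.monoid.one = (\<lambda>x c. if c \<in> Bmod r n x then \<one>\<^bsub>A x\<^esub> else undefined)\<rparr>"

definition cobdry :: "nat \<Rightarrow> nat \<Rightarrow> ('m::comm_monoid_mult \<Rightarrow> 'm chain \<Rightarrow> 'a) \<Rightarrow> ('m \<Rightarrow> 'm chain \<Rightarrow> 'a)" where
  "cobdry r n f = (\<lambda>x c. if c \<in> Bmod r (Suc n) x then f x (bdiff r c) else undefined)"

definition cocycles :: "nat \<Rightarrow> nat \<Rightarrow> ('m::comm_monoid_mult \<Rightarrow> 'a monoid) \<Rightarrow> ('m \<Rightarrow> 'm \<Rightarrow> 'a \<Rightarrow> 'a)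
    \<Rightarrow> ('m \<Rightarrow> 'm chain \<Rightarrow> 'a) set" where
  "cocycles r n A act = {f \<in> HomB r n A act. cobdry r n f = \<one>\<^bsub>HomG r (Suc n) A act\<^esub>}"

definition coboundaries :: "nat \<Rightarrow> nat \<Rightarrow> ('m::comm_monoid_mult \<Rightarrow> 'a monoid) \<Rightarrow> ('m \<Rightarrow> 'm \<Rightarrow> 'a \<Rightarrow> 'a)
    \<Rightarrow> ('m \<Rightarrow> 'm chain \<Rightarrow> 'a) set" where
  "coboundaries r n A act = (case n of 0 \<Rightarrow> {\<one>\<^bsub>HomG r 0 A act\<^esub>}
                               | Suc m \<Rightarrow> cobdry r m ` HomB r m A act)"

text \<open>H^n(M, r; A) = H^n(Hom_HM(B^r(ZM), A)).\<close>
definition cohom :: "nat \<Rightarrow> nat \<Rightarrow> ('m::comm_monoid_mult \<Rightarrow> 'a monoid) \<Rightarrow> ('m \<Rightarrow> 'm \<Rightarrow> 'a \<Rightarrow> 'a)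
    \<Rightarrow> ('m \<Rightarrow> 'm chain \<Rightarrow> 'a) set monoid" where
  "cohom n r A act = (HomG r n A act)\<lparr>carrier := cocycles r n A act\<rparr> Mod coboundaries r n A act"

end

(* For r >= 1 the only degree-0 generator of B^r(ZM) is the empty bar [ ], so B^r(ZM)_0 is the
   free HM-module on one generator sitting at e: its elements at x are the k x_*[ ].  A natural
   family of homomorphisms f into A is therefore determined by f_e[ ] in A(e), and every a in A(e)
   arises, from k x_*[ ] |-> x_*(a^k).  The differential vanishes on B^r(ZM)_1: for r = 1 a
   generator [v] has boundary v_*[ ] - v_*[ ] (the two augmentation terms cancel), and for r >= 2
   there is no generator of degree 1 at all, because the only degree-0 generator of B^(r-1)(ZM) is
   its unit, which bars exclude.  Hence all 0-cochains are cocycles, the only 0-coboundary is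
   trivial, and H^0 = Hom(B_0, A) = A(e). *)

theory Submission
  imports Defs
begin

lemma bunit_iter_bar_Suc: "bunit (iter_bar (Suc r)) = Bar []"
  by (simp add: iter_bar_def barstep_def)

lemma Bar_Nil_in_gens: "r \<ge> 1 \<Longrightarrow> Bar [] \<in> gens r"
  by (cases r) auto

lemma gens_gdeg_0:
  assumes "r \<ge> 1" "g \<in> gens r" "gdeg g = 0"
  shows "g = Bar []"
proof -
  obtain r' where "r = Suc r'" using assms(1) by (cases r) auto
  then obtain gs where "g = Bar gs" using assms(2) by auto
  then show ?thesis using assms(3) by simp
qed

lemma Bmod_0_iff_keys:
  assumes "r \<ge> 1"
  shows "c \<in> Bmod r 0 x \<longleftrightarrow> Poly_Mapping.keys c \<subseteq> {(x, Bar [])}"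
proof
  assume c: "c \<in> Bmod r 0 x"
  show "Poly_Mapping.keys c \<subseteq> {(x, Bar [])}"
  proof (clarify)
    fix w g assume "(w, g) \<in> Poly_Mapping.keys c"
    with c have "g \<in> gens r" "gdeg g = 0" and wx: "w * wt g = x" unfolding Bmod_def by auto
    then have "g = Bar []" using gens_gdeg_0[OF assms] by blast
    with wx show "w = x \<and> g = Bar []" by simp
  qed
next
  assume "Poly_Mapping.keys c \<subseteq> {(x, Bar [])}"
  then show "c \<in> Bmod r 0 x"
    unfolding Bmod_def using Bar_Nil_in_gens[OF assms] by auto
qed

lemma Bmod_0_cases:
  assumes "r \<ge> 1" "c \<in> Bmod r 0 x"
  obtains k where "c = frag_cmul k (frag_of (x, Bar []))"
proof
  have "Poly_Mapping.keys c \<subseteq> {(x, Bar [])}" using assms Bmod_0_iff_keys by blast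
  then show "c = frag_cmul (Poly_Mapping.lookup c (x, Bar [])) (frag_of (x, Bar []))"
    by (intro poly_mapping_eqI) (auto simp: lookup_single in_keys_iff)
qed

lemma frag_cmul_Bar_Nil_in_Bmod_0: "r \<ge> 1 \<Longrightarrow> frag_cmul k (frag_of (x, Bar [])) \<in> Bmod r 0 x"
  using keys_cmul[of k "frag_of (x, Bar [])"] by (simp add: Bmod_0_iff_keys keys_frag_of)

lemma bd_iter_bar_gdeg_1:
  assumes "r \<ge> 1" "g \<in> gens r" "gdeg g = 1"
  shows "bd (iter_bar r) g = 0"
proof -
  obtain r' where r: "r = Suc r'" using assms(1) by (cases r) auto
  with assms(2) obtain gs where gs: "g = Bar gs" "set gs \<subseteq> gens r' - {bunit (iter_bar r')}"
    by auto
  with assms(3) obtain h where "gs = [h]" "gdeg h = 0"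
    by (cases gs) auto
  with gs have h: "g = Bar [h]" "h \<in> gens r'" "h \<noteq> bunit (iter_bar r')" "gdeg h = 0"
    by auto
  show ?thesis
  proof (cases r')
    case 0
    then obtain v where "h = Gz v" using h by auto
    then show ?thesis
      using r 0 h by (simp add: iter_bar_def barstep_def zm_def bar_diff_def bar_repl_def esgn_def)
  next
    case (Suc r'')
    then have "h = Bar []" using gens_gdeg_0[OF _ h(2) h(4)] by simp
    then show ?thesis using h(3) Suc by (simp add: bunit_iter_bar_Suc)
  qed
qed

lemma bdiff_Bmod_1:
  assumes "r \<ge> 1" "c \<in> Bmod r 1 x"
  shows "bdiff r c = 0"
  unfolding bdiff_def
proof (rule frag_extend_eq_0, clarify)
  fix w g assume "(w, g) \<in> Poly_Mapping.keys c"
  with assms(2) have "g \<in> gens r" "gdeg g = 1" unfolding Bmod_def by auto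
  then have "bd (iter_bar r) g = 0" by (rule bd_iter_bar_gdeg_1[OF assms(1)])
  then show "push w (bd (iter_bar r) g) = 0" by (simp add: push_def)
qed

lemma push_cmul_frag_of: "push y (frag_cmul k (frag_of (x, g))) = frag_cmul k (frag_of (y * x, g))"
  by (simp add: push_def frag_extend_cmul)

lemma push_Bmod:
  assumes "c \<in> Bmod r n x"
  shows "push y c \<in> Bmod r n (x * y)"
  unfolding Bmod_def
proof (clarify)
  fix v g assume "(v, g) \<in> Poly_Mapping.keys (push y c)"
  moreover have "Poly_Mapping.keys (push y c) \<subseteq> (\<Union>(w, g) \<in> Poly_Mapping.keys c. {(y * w, g)})"
    unfolding push_def using keys_frag_extend[of "\<lambda>(w, g). frag_of (y * w, g)" c]
    by (simp add: keys_frag_of case_prod_unfold)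
  ultimately obtain w where "(w, g) \<in> Poly_Mapping.keys c" "v = y * w" by blast
  with assms show "g \<in> gens r \<and> gdeg g = n \<and> v * wt g = x * y"
    unfolding Bmod_def by (auto simp: mult_ac)
qed

lemma Bmod_zero: "0 \<in> Bmod r n x"
  unfolding Bmod_def by simp

lemma Bmod_add: "c \<in> Bmod r n x \<Longrightarrow> d \<in> Bmod r n x \<Longrightarrow> c + d \<in> Bmod r n x"
  unfolding Bmod_def using keys_add by fastforce

lemma Bmod_uminus: "c \<in> Bmod r n x \<Longrightarrow> - c \<in> Bmod r n x"
  unfolding Bmod_def by simp

lemma Bmod_frag_cmul: "c \<in> Bmod r n x \<Longrightarrow> frag_cmul k c \<in> Bmod r n x"
  unfolding Bmod_def using keys_cmul by fastforce

lemma carrier_Bgrp [simp]: "carrier (Bgrp r n x) = Bmod r n x"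
  and mult_Bgrp [simp]: "c \<otimes>\<^bsub>Bgrp r n x\<^esub> d = c + d"
  and one_Bgrp [simp]: "\<one>\<^bsub>Bgrp r n x\<^esub> = 0"
  by (simp_all add: Bgrp_def)

lemma group_Bgrp: "group (Bgrp r n x)"
proof (rule groupI)
  fix c assume "c \<in> carrier (Bgrp r n x)"
  then show "\<exists>d \<in> carrier (Bgrp r n x). d \<otimes>\<^bsub>Bgrp r n x\<^esub> c = \<one>\<^bsub>Bgrp r n x\<^esub>"
    using Bmod_uminus by (intro bexI[of _ "- c"]) auto
qed (auto simp: Bmod_add Bmod_zero add.assoc)

lemma Bgrp_int_pow:
  assumes "c \<in> Bmod r n x"
  shows "c [^]\<^bsub>Bgrp r n x\<^esub> (k::int) = frag_cmul k c"
proof -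
  interpret group "Bgrp r n x" by (rule group_Bgrp)
  have nat_pow: "c [^]\<^bsub>Bgrp r n x\<^esub> (m::nat) = frag_cmul (int m) c" for m
    by (induction m) (simp_all add: frag_cmul_distrib)
  have "inv\<^bsub>Bgrp r n x\<^esub> d = - d" if "d \<in> Bmod r n x" for d
    using that by (intro inv_equality) (simp_all add: Bmod_uminus)
  then show ?thesis
    using nat_pow Bmod_frag_cmul[OF assms] by (simp add: int_pow_def2)
qed

lemma hom_Bgrp_frag_cmul:
  assumes "h \<in> hom (Bgrp r n x) G" "group G" "c \<in> Bmod r n x"
  shows "h (frag_cmul k c) = h c [^]\<^bsub>G\<^esub> k"
  using hom_int_pow[OF assms(1) _ group_Bgrp assms(2), of c k] assms(3)
  by (simp add: Bgrp_int_pow)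

lemma hm_module_comm_group: "hm_module A act \<Longrightarrow> comm_group (A x)"
  by (simp add: hm_module_def)

lemma hm_module_group_hom: "hm_module A act \<Longrightarrow> group_hom (A x) (A (x * y)) (act x y)"
  by (simp add: hm_module_def group_hom_def group_hom_axioms_def comm_group_def)

lemma hm_module_act_one: "hm_module A act \<Longrightarrow> a \<in> carrier (A x) \<Longrightarrow> act x 1 a = a"
  by (simp add: hm_module_def)

lemma hm_module_act_act:
  "hm_module A act \<Longrightarrow> a \<in> carrier (A x) \<Longrightarrow> act (x * y) z (act x y a) = act x (y * z) a"
  by (simp add: hm_module_def)

lemma carrier_HomG [simp]: "carrier (HomG r n A act) = HomB r n A act"
  by (simp add: HomG_def)

lemma HomBI:
  assumes "\<And>x. f x \<in> hom (Bgrp r n x) (A x)"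
    and "\<And>x c. c \<notin> Bmod r n x \<Longrightarrow> f x c = undefined"
    and "\<And>x y c. c \<in> Bmod r n x \<Longrightarrow> f (x * y) (push y c) = act x y (f x c)"
  shows "f \<in> HomB r n A act"
  using assms unfolding HomB_def by blast

lemma HomB_hom: "f \<in> HomB r n A act \<Longrightarrow> f x \<in> hom (Bgrp r n x) (A x)"
  unfolding HomB_def by blast

lemma HomB_closed: "f \<in> HomB r n A act \<Longrightarrow> c \<in> Bmod r n x \<Longrightarrow> f x c \<in> carrier (A x)"
  using HomB_hom hom_in_carrier by fastforce

lemma HomB_undefined: "f \<in> HomB r n A act \<Longrightarrow> c \<notin> Bmod r n x \<Longrightarrow> f x c = undefined"
  unfolding HomB_def by blast

lemma HomB_natural:
  "f \<in> HomB r n A act \<Longrightarrow> c \<in> Bmod r n x \<Longrightarrow> f (x * y) (push y c) = act x y (f x c)"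
  unfolding HomB_def by blast

lemma HomB_mult_closed:
  fixes A :: "'m::comm_monoid_mult \<Rightarrow> 'a monoid"
  assumes M: "hm_module A act" and f: "f \<in> HomB r n A act" and g: "g \<in> HomB r n A act"
  shows "f \<otimes>\<^bsub>HomG r n A act\<^esub> g \<in> HomB r n A act"
proof (rule HomBI)
  fix x :: 'm
  interpret comm_group "A x" using M by (rule hm_module_comm_group)
  show "(f \<otimes>\<^bsub>HomG r n A act\<^esub> g) x \<in> hom (Bgrp r n x) (A x)"
  proof (rule homI)
    fix c assume "c \<in> carrier (Bgrp r n x)"
    then show "(f \<otimes>\<^bsub>HomG r n A act\<^esub> g) x c \<in> carrier (A x)"
      using HomB_closed[OF f] HomB_closed[OF g] by (simp add: HomG_def)
  next
    fix c d assume "c \<in> carrier (Bgrp r n x)" "d \<in> carrier (Bgrp r n x)"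
    then show "(f \<otimes>\<^bsub>HomG r n A act\<^esub> g) x (c \<otimes>\<^bsub>Bgrp r n x\<^esub> d)
        = (f \<otimes>\<^bsub>HomG r n A act\<^esub> g) x c \<otimes>\<^bsub>A x\<^esub> (f \<otimes>\<^bsub>HomG r n A act\<^esub> g) x d"
      using HomB_closed[OF f] HomB_closed[OF g]
        Group.hom_mult[OF HomB_hom[OF f]] Group.hom_mult[OF HomB_hom[OF g]]
      by (simp add: HomG_def Bmod_add m_ac)
  qed
next
  fix x :: 'm and c assume "c \<notin> Bmod r n x"
  then show "(f \<otimes>\<^bsub>HomG r n A act\<^esub> g) x c = undefined" by (simp add: HomG_def)
next
  fix x y :: 'm and c assume c: "c \<in> Bmod r n x"
  interpret group_hom "A x" "A (x * y)" "act x y" using M by (rule hm_module_group_hom)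
  show "(f \<otimes>\<^bsub>HomG r n A act\<^esub> g) (x * y) (push y c) = act x y ((f \<otimes>\<^bsub>HomG r n A act\<^esub> g) x c)"
    using c push_Bmod[OF c] HomB_natural[OF f c] HomB_natural[OF g c]
      HomB_closed[OF f c] HomB_closed[OF g c]
    by (simp add: HomG_def)
qed

lemma HomB_one:
  fixes A :: "'m::comm_monoid_mult \<Rightarrow> 'a monoid"
  assumes M: "hm_module A act"
  shows "\<one>\<^bsub>HomG r n A act\<^esub> \<in> HomB r n A act"
proof (rule HomBI)
  fix x :: 'm
  interpret comm_group "A x" using M by (rule hm_module_comm_group)
  show "\<one>\<^bsub>HomG r n A act\<^esub> x \<in> hom (Bgrp r n x) (A x)"
    by (rule homI) (simp_all add: HomG_def Bmod_add)
next
  fix x :: 'm and c assume "c \<notin> Bmod r n x"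
  then show "\<one>\<^bsub>HomG r n A act\<^esub> x c = undefined" by (simp add: HomG_def)
next
  fix x y :: 'm and c assume c: "c \<in> Bmod r n x"
  interpret group_hom "A x" "A (x * y)" "act x y" using M by (rule hm_module_group_hom)
  show "\<one>\<^bsub>HomG r n A act\<^esub> (x * y) (push y c) = act x y (\<one>\<^bsub>HomG r n A act\<^esub> x c)"
    using c push_Bmod[OF c] by (simp add: HomG_def)
qed

lemma HomB_inv_closed:
  fixes A :: "'m::comm_monoid_mult \<Rightarrow> 'a monoid"
  assumes M: "hm_module A act" and f: "f \<in> HomB r n A act"
  shows "(\<lambda>x c. if c \<in> Bmod r n x then inv\<^bsub>A x\<^esub> f x c else undefined) \<in> HomB r n A act"
proof (rule HomBI)
  fix x :: 'm
  interpret comm_group "A x" using M by (rule hm_module_comm_group)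
  show "(\<lambda>c. if c \<in> Bmod r n x then inv\<^bsub>A x\<^esub> f x c else undefined) \<in> hom (Bgrp r n x) (A x)"
    using HomB_closed[OF f] Group.hom_mult[OF HomB_hom[OF f]]
    by (intro homI) (simp_all add: Bmod_add inv_mult)
next
  fix x y :: 'm and c assume c: "c \<in> Bmod r n x"
  interpret group_hom "A x" "A (x * y)" "act x y" using M by (rule hm_module_group_hom)
  show "(if push y c \<in> Bmod r n (x * y) then inv\<^bsub>A (x * y)\<^esub> f (x * y) (push y c) else undefined)
      = act x y (if c \<in> Bmod r n x then inv\<^bsub>A x\<^esub> f x c else undefined)"
    using c push_Bmod[OF c] HomB_natural[OF f c] HomB_closed[OF f c] by simp
qed simp

lemma group_HomG:
  fixes A :: "'m::comm_monoid_mult \<Rightarrow> 'a monoid"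
  assumes M: "hm_module A act"
  shows "group (HomG r n A act)"
proof (rule groupI)
  fix f g h assume f: "f \<in> carrier (HomG r n A act)" and g: "g \<in> carrier (HomG r n A act)"
    and h: "h \<in> carrier (HomG r n A act)"
  show "f \<otimes>\<^bsub>HomG r n A act\<^esub> g \<otimes>\<^bsub>HomG r n A act\<^esub> h
      = f \<otimes>\<^bsub>HomG r n A act\<^esub> (g \<otimes>\<^bsub>HomG r n A act\<^esub> h)"
  proof (intro ext)
    fix x :: 'm and c
    interpret comm_group "A x" using M by (rule hm_module_comm_group)
    show "(f \<otimes>\<^bsub>HomG r n A act\<^esub> g \<otimes>\<^bsub>HomG r n A act\<^esub> h) x c
        = (f \<otimes>\<^bsub>HomG r n A act\<^esub> (g \<otimes>\<^bsub>HomG r n A act\<^esub> h)) x c"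
      using f g h HomB_closed[of f] HomB_closed[of g] HomB_closed[of h]
      by (simp add: HomG_def m_assoc)
  qed
next
  fix f assume f: "f \<in> carrier (HomG r n A act)"
  show "\<one>\<^bsub>HomG r n A act\<^esub> \<otimes>\<^bsub>HomG r n A act\<^esub> f = f"
  proof (intro ext)
    fix x :: 'm and c
    interpret comm_group "A x" using M by (rule hm_module_comm_group)
    show "(\<one>\<^bsub>HomG r n A act\<^esub> \<otimes>\<^bsub>HomG r n A act\<^esub> f) x c = f x c"
      using f HomB_closed[of f] HomB_undefined[of f] by (simp add: HomG_def)
  qed
  let ?g = "\<lambda>x c. if c \<in> Bmod r n x then inv\<^bsub>A x\<^esub> f x c else undefined"
  have "?g \<otimes>\<^bsub>HomG r n A act\<^esub> f = \<one>\<^bsub>HomG r n A act\<^esub>"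
  proof (intro ext)
    fix x :: 'm and c
    interpret comm_group "A x" using M by (rule hm_module_comm_group)
    show "(?g \<otimes>\<^bsub>HomG r n A act\<^esub> f) x c = \<one>\<^bsub>HomG r n A act\<^esub> x c"
      using f HomB_closed[of f] by (simp add: HomG_def)
  qed
  then show "\<exists>g \<in> carrier (HomG r n A act). g \<otimes>\<^bsub>HomG r n A act\<^esub> f = \<one>\<^bsub>HomG r n A act\<^esub>"
    using HomB_inv_closed[OF M] f by (auto simp: HomG_def)
qed (use HomB_mult_closed[OF M] HomB_one[OF M] in \<open>simp_all add: HomG_def\<close>)

definition cochain0 :: "nat \<Rightarrow> ('m::comm_monoid_mult \<Rightarrow> 'a monoid) \<Rightarrow> ('m \<Rightarrow> 'm \<Rightarrow> 'a \<Rightarrow> 'a) \<Rightarrow> 'a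
    \<Rightarrow> ('m \<Rightarrow> 'm chain \<Rightarrow> 'a)" where
  "cochain0 r A act a = (\<lambda>x c. if c \<in> Bmod r 0 x
      then act 1 x (a [^]\<^bsub>A 1\<^esub> Poly_Mapping.lookup c (x, Bar [])) else undefined)"

lemma cochain0_frag_cmul:
  "r \<ge> 1 \<Longrightarrow> cochain0 r A act a x (frag_cmul k (frag_of (x, Bar []))) = act 1 x (a [^]\<^bsub>A 1\<^esub> k)"
  using frag_cmul_Bar_Nil_in_Bmod_0[of r k x] by (simp add: cochain0_def)

lemma cochain0_in_HomB:
  fixes A :: "'m::comm_monoid_mult \<Rightarrow> 'a monoid"
  assumes M: "hm_module A act" and r: "r \<ge> 1" and a: "a \<in> carrier (A 1)"
  shows "cochain0 r A act a \<in> HomB r 0 A act"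
proof (rule HomBI)
  fix x :: 'm
  interpret A1: group "A 1" using hm_module_comm_group[OF M] comm_group_def by blast
  interpret act: group_hom "A 1" "A (1 * x)" "act 1 x" using M by (rule hm_module_group_hom)
  show "cochain0 r A act a x \<in> hom (Bgrp r 0 x) (A x)"
  proof (rule homI)
    fix c assume "c \<in> carrier (Bgrp r 0 x)"
    then obtain k where "c = frag_cmul k (frag_of (x, Bar []))" using Bmod_0_cases[OF r] by auto
    then show "cochain0 r A act a x c \<in> carrier (A x)"
      using act.hom_closed[of "a [^]\<^bsub>A 1\<^esub> k"] a by (simp add: cochain0_frag_cmul[OF r])
  next
    fix c d assume "c \<in> carrier (Bgrp r 0 x)" "d \<in> carrier (Bgrp r 0 x)"
    then obtain k l where "c = frag_cmul k (frag_of (x, Bar []))" "d = frag_cmul l (frag_of (x, Bar []))"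
      using Bmod_0_cases[OF r] by (metis carrier_Bgrp)
    then show "cochain0 r A act a x (c \<otimes>\<^bsub>Bgrp r 0 x\<^esub> d)
        = cochain0 r A act a x c \<otimes>\<^bsub>A x\<^esub> cochain0 r A act a x d"
      using a by (simp add: cochain0_frag_cmul[OF r] A1.int_pow_mult flip: frag_cmul_distrib)
  qed
next
  fix x :: 'm and c assume "c \<notin> Bmod r 0 x"
  then show "cochain0 r A act a x c = undefined" by (simp add: cochain0_def)
next
  fix x y :: 'm and c assume "c \<in> Bmod r 0 x"
  then obtain k where "c = frag_cmul k (frag_of (x, Bar []))" using Bmod_0_cases[OF r] by blast
  moreover have "a [^]\<^bsub>A 1\<^esub> k \<in> carrier (A 1)" for k :: int
    using hm_module_comm_group[OF M] a by (simp add: comm_group_def group.int_pow_closed)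
  ultimately show "cochain0 r A act a (x * y) (push y c) = act x y (cochain0 r A act a x c)"
    using hm_module_act_act[OF M, of _ 1 x y]
    by (simp add: push_cmul_frag_of cochain0_frag_cmul[OF r] mult.commute)
qed

lemma HomB_0_eq_cochain0:
  fixes A :: "'m::comm_monoid_mult \<Rightarrow> 'a monoid"
  assumes M: "hm_module A act" and r: "r \<ge> 1" and f: "f \<in> HomB r 0 A act"
  shows "f = cochain0 r A act (f 1 (frag_of (1, Bar [])))"
proof (intro ext)
  fix x :: 'm and c
  show "f x c = cochain0 r A act (f 1 (frag_of (1, Bar []))) x c"
  proof (cases "c \<in> Bmod r 0 x")
    case True
    then obtain k where c: "c = frag_cmul k (frag_of (x, Bar []))" using Bmod_0_cases[OF r] by blast
    have "f x c = f (1 * x) (push x (frag_cmul k (frag_of (1, Bar []))))"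
      by (simp add: c push_cmul_frag_of)
    also have "\<dots> = act 1 x (f 1 (frag_cmul k (frag_of (1, Bar []))))"
      using HomB_natural[OF f frag_cmul_Bar_Nil_in_Bmod_0[OF r]] .
    also have "\<dots> = act 1 x (f 1 (frag_of (1, Bar [])) [^]\<^bsub>A 1\<^esub> k)"
      using hom_Bgrp_frag_cmul[OF HomB_hom[OF f] _ frag_cmul_Bar_Nil_in_Bmod_0[OF r, of 1]]
        hm_module_comm_group[OF M] by (simp add: comm_group_def)
    finally show ?thesis by (simp add: c cochain0_frag_cmul[OF r])
  next
    case False
    then show ?thesis using HomB_undefined[OF f] by (simp add: cochain0_def)
  qed
qed

lemma eval_Bar_Nil_iso:
  fixes A :: "'m::comm_monoid_mult \<Rightarrow> 'a monoid"
  assumes M: "hm_module A act" and r: "r \<ge> 1"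
  shows "(\<lambda>f. f 1 (frag_of (1, Bar []))) \<in> iso (HomG r 0 A act) (A 1)"
proof -
  let ?e = "frag_of (1 :: 'm, Bar [])"
  have e: "?e \<in> Bmod r 0 1" using frag_cmul_Bar_Nil_in_Bmod_0[OF r, of 1] by simp
  have "(\<lambda>f. f 1 ?e) \<in> hom (HomG r 0 A act) (A 1)"
  proof (rule homI)
    fix f assume "f \<in> carrier (HomG r 0 A act)"
    then show "f 1 ?e \<in> carrier (A 1)" using HomB_closed e by simp
  next
    fix f g
    show "(f \<otimes>\<^bsub>HomG r 0 A act\<^esub> g) 1 ?e = f 1 ?e \<otimes>\<^bsub>A 1\<^esub> g 1 ?e"
      using e by (simp add: HomG_def)
  qed
  moreover have "inj_on (\<lambda>f. f 1 ?e) (HomB r 0 A act)"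
    by (rule inj_onI) (metis HomB_0_eq_cochain0[OF M r])
  moreover have "carrier (A 1) \<subseteq> (\<lambda>f. f 1 ?e) ` HomB r 0 A act"
  proof
    fix a assume a: "a \<in> carrier (A 1)"
    have "cochain0 r A act a 1 ?e = act 1 1 (a [^]\<^bsub>A 1\<^esub> (1::int))"
      using cochain0_frag_cmul[OF r, of A act a 1 1] by simp
    also have "\<dots> = a"
      using a hm_module_act_one[OF M] hm_module_comm_group[OF M]
      by (simp add: comm_group_def group.int_pow_1)
    finally show "a \<in> (\<lambda>f. f 1 ?e) ` HomB r 0 A act"
      using cochain0_in_HomB[OF M r a] by (metis image_eqI)
  qed
  ultimately show ?thesis
    using e HomB_closed by (fastforce simp: iso_def bij_betw_def)
qed

lemma cocycles_0_eq_HomB: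
  fixes A :: "'m::comm_monoid_mult \<Rightarrow> 'a monoid"
  assumes M: "hm_module A act" and r: "r \<ge> 1"
  shows "cocycles r 0 A act = HomB r 0 A act"
proof -
  have "cobdry r 0 f = \<one>\<^bsub>HomG r 1 A act\<^esub>" if f: "f \<in> HomB r 0 A act" for f
  proof (intro ext)
    fix x :: 'm and c
    have "f x 0 = \<one>\<^bsub>A x\<^esub>"
      using hom_one[OF HomB_hom[OF f] group_Bgrp] hm_module_comm_group[OF M]
      by (simp add: comm_group_def)
    then show "cobdry r 0 f x c = \<one>\<^bsub>HomG r 1 A act\<^esub> x c"
      using bdiff_Bmod_1[OF r, of c x] by (simp add: cobdry_def HomG_def)
  qed
  then show ?thesis unfolding cocycles_def by auto
qed

lemma cohom_0_eq:
  assumes "hm_module A act" "r \<ge> 1"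
  shows "cohom 0 r A act = HomG r 0 A act Mod {\<one>\<^bsub>HomG r 0 A act\<^esub>}"
  using cocycles_0_eq_HomB[OF assms] by (simp add: cohom_def coboundaries_def HomG_def)

theorem corollary5p5:
  fixes A :: "'m::comm_monoid_mult \<Rightarrow> 'a monoid"
    and act :: "'m \<Rightarrow> 'm \<Rightarrow> 'a \<Rightarrow> 'a"
    and r :: nat
  assumes "hm_module A act"
    and "r \<ge> 1"
  shows "cohom 0 r A act \<cong> A 1"
proof -
  have "cohom 0 r A act = HomG r 0 A act Mod {\<one>\<^bsub>HomG r 0 A act\<^esub>}"
    using cohom_0_eq[OF assms] .
  also have "\<dots> \<cong> HomG r 0 A act"
    using group.trivial_factor_iso[OF group_HomG[OF assms(1)]] unfolding is_iso_def by blast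
  also have "\<dots> \<cong> A 1"
    using eval_Bar_Nil_iso[OF assms] unfolding is_iso_def by blast
  finally show ?thesis .
qed

end
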